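(* Let $A$ and $B$ be rings, $f: A\to B$ a ring homomorphism and $J$ a proper ideal of $B$. Let $S$ be the set of regular central elements of $B$ (central elements that are not zero divisors), and assume $J\cap S\neq\varnothing$. Then $A\bowtie^{f}J$ is a nil-Armendariz ring if and only if both $A$ and $f(A)+J$ are nil-Armendariz rings.
   Context: All rings are associative with identity (not necessarily commutative), ring homomorphisms are unital, and ideals are two-sided. $\mathrm{nil}(R)$ denotes the set of nilpotent elements of a ring $R$, and $\mathrm{nil}(R)[x]$ the set of polynomials all of whose coefficients lie in $\mathrm{nil}(R)$. For a ring homomorphism $f:A\to B$ and an ideal $J$ of $B$, the amalgamation is the subring $A\bowtie^{f}J=\{(a,f(a)+j)\mid a\in A,\ j\in J\}$ of $A\times B$; $f(A)+J=\{f(a)+j: a\in A, j\in J\}$ is a subring of $B$. A ring $R$ is nil-Armendariz if whenever $p(x)=\sum_{i=0}^n a_ix^i$ and $q(x)=\sum_{j=0}^m b_jx^j$ in $R[x]$ satisfy $p(x)q(x)\in\mathrm{nil}(R)[x]$, then $a_ib_j\in\mathrm{nil}(R)$ for all $i,j$. *)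

theory Defs
  imports Main "HOL-Library.Product_Plus"
begin

instantiation prod :: (one, one) one
begin
definition one_prod_def: "1 = (1, 1)"
instance ..
end

instantiation prod :: (times, times) times
begin
definition times_prod_def: "x * y = (fst x * fst y, snd x * snd y)"
instance ..
end

instance prod :: (ring_1, ring_1) ring_1
  by standard (auto simp: one_prod_def times_prod_def zero_prod_def plus_prod_def
      algebra_simps prod_eq_iff)

definition nilpotent :: "'a::ring_1 \<Rightarrow> bool" where
  "nilpotent x \<longleftrightarrow> (\<exists>k::nat. x ^ k = 0)"

definition ring_hom :: "('a::ring_1 \<Rightarrow> 'b::ring_1) \<Rightarrow> bool" where
  "ring_hom f \<longleftrightarrow> f 1 = 1 \<and> (\<forall>x y. f (x + y) = f x + f y) \<and> (\<forall>x y. f (x * y) = f x * f y)"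

definition two_sided_ideal :: "'a::ring_1 set \<Rightarrow> bool" where
  "two_sided_ideal J \<longleftrightarrow> 0 \<in> J \<and> (\<forall>x\<in>J. \<forall>y\<in>J. x + y \<in> J) \<and> (\<forall>x\<in>J. - x \<in> J)
     \<and> (\<forall>r x. x \<in> J \<longrightarrow> r * x \<in> J \<and> x * r \<in> J)"

definition regular_central :: "'a::ring_1 \<Rightarrow> bool" where
  "regular_central s \<longleftrightarrow> (\<forall>x. s * x = x * s) \<and> (\<forall>x. s * x = 0 \<longrightarrow> x = 0) \<and> (\<forall>x. x * s = 0 \<longrightarrow> x = 0)"

text \<open>Amalgamation A \<bowtie>^f J (A is the whole type 'a), and the subring f(A)+J of B.\<close>
definition amalg :: "('a::ring_1 \<Rightarrow> 'b::ring_1) \<Rightarrow> 'b set \<Rightarrow> ('a \<times> 'b) set" where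
  "amalg f J = {(a, f a + j) | a j. j \<in> J}"

definition img_plus :: "('a::ring_1 \<Rightarrow> 'b::ring_1) \<Rightarrow> 'b set \<Rightarrow> 'b set" where
  "img_plus f J = {f a + j | a j. j \<in> J}"

text \<open>A polynomial of degree at most n with coefficients in R is given by a coefficient
  function a restricted to indices 0..n (polynomials over a noncommutative ring,
  the indeterminate commuting with coefficients). The product p q has k-th coefficient
  \<Sum>_{i+j=k} a_i b_j. Nilpotency in R coincides with nilpotency in the ambient ring.\<close>
definition nil_armendariz_on :: "'a::ring_1 set \<Rightarrow> bool" where
  "nil_armendariz_on R \<longleftrightarrow>
     (\<forall>(a::nat \<Rightarrow> 'a) n (b::nat \<Rightarrow> 'a) m.
        (\<forall>i\<le>n. a i \<in> R) \<and> (\<forall>j\<le>m. b j \<in> R) \<and>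
        (\<forall>k\<le>n + m. nilpotent (\<Sum>i\<le>n. \<Sum>j\<le>m. if i + j = k then a i * b j else 0))
        \<longrightarrow> (\<forall>i\<le>n. \<forall>j\<le>m. nilpotent (a i * b j)))"

end

theory Submission
  imports Defs
begin

text \<open>Both components of \<open>A \<bowtie>\<^sup>f J\<close> inherit the nil-Armendariz property from it: \<open>A\<close> embeds
  diagonally via \<open>a \<mapsto> (a, f a)\<close>, and \<open>f(A) + J\<close> is carried into the ideal \<open>0 \<times> J\<close> by
  multiplication with a regular central element \<open>s \<in> J\<close>. Scaling both polynomials by \<open>s\<close>
  scales every coefficient of their product by \<open>s\<^sup>2\<close>, and multiplication by \<open>s\<close> neither creates
  nor destroys nilpotency. Conversely \<open>A \<bowtie>\<^sup>f J \<subseteq> A \<times> (f(A) + J)\<close>, and nilpotency in a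
  product is componentwise.\<close>

definition mult_coeff :: "(nat \<Rightarrow> 'a::ring_1) \<Rightarrow> nat \<Rightarrow> (nat \<Rightarrow> 'a) \<Rightarrow> nat \<Rightarrow> nat \<Rightarrow> 'a" where
  "mult_coeff a n b m k = (\<Sum>i\<le>n. \<Sum>j\<le>m. if i + j = k then a i * b j else 0)"

lemma nil_armendariz_onI:
  assumes "\<And>a n b m i j. \<forall>i\<le>n. a i \<in> R \<Longrightarrow> \<forall>j\<le>m. b j \<in> R \<Longrightarrow>
             \<forall>k\<le>n + m. nilpotent (mult_coeff a n b m k) \<Longrightarrow> i \<le> n \<Longrightarrow> j \<le> m \<Longrightarrow>
             nilpotent (a i * b j)"
  shows "nil_armendariz_on R"
  using assms unfolding nil_armendariz_on_def mult_coeff_def by blast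

lemma nil_armendariz_onD:
  assumes "nil_armendariz_on R" "\<forall>i\<le>n. a i \<in> R" "\<forall>j\<le>m. b j \<in> R"
    "\<forall>k\<le>n + m. nilpotent (mult_coeff a n b m k)" "i \<le> n" "j \<le> m"
  shows "nilpotent (a i * b j)"
  using assms unfolding nil_armendariz_on_def mult_coeff_def by blast

lemma nil_armendariz_on_subset:
  "S \<subseteq> R \<Longrightarrow> nil_armendariz_on R \<Longrightarrow> nil_armendariz_on S"
  unfolding nil_armendariz_on_def by blast

lemma power_eq_0_mono: "(x::'a::ring_1) ^ k = 0 \<Longrightarrow> k \<le> l \<Longrightarrow> x ^ l = 0"
  by (metis le_add_diff_inverse mult_zero_left power_add)

lemma fst_power: "fst ((p::'a::ring_1 \<times> 'b::ring_1) ^ k) = fst p ^ k"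
  by (induction k) (auto simp: one_prod_def times_prod_def)

lemma snd_power: "snd ((p::'a::ring_1 \<times> 'b::ring_1) ^ k) = snd p ^ k"
  by (induction k) (auto simp: one_prod_def times_prod_def)

lemma nilpotent_prod_iff:
  "nilpotent (p::'a::ring_1 \<times> 'b::ring_1) \<longleftrightarrow> nilpotent (fst p) \<and> nilpotent (snd p)"
proof
  assume "nilpotent p"
  then show "nilpotent (fst p) \<and> nilpotent (snd p)"
    unfolding nilpotent_def by (metis fst_power snd_power fst_zero snd_zero)
next
  assume "nilpotent (fst p) \<and> nilpotent (snd p)"
  then obtain k l where "fst p ^ k = 0" "snd p ^ l = 0"
    unfolding nilpotent_def by blast
  then have "fst p ^ max k l = 0" "snd p ^ max k l = 0"
    by (auto intro: power_eq_0_mono)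
  then have "p ^ max k l = 0"
    by (simp add: prod_eq_iff fst_power snd_power)
  then show "nilpotent p"
    unfolding nilpotent_def by blast
qed

lemma central_power_mult:
  assumes "\<forall>y. s * y = y * s"
  shows "(s * x) ^ k = s ^ k * (x::'a::ring_1) ^ k"
proof (induction k)
  case (Suc k)
  have "s ^ k * x = x * s ^ k"
    using assms by (simp add: power_commuting_commutes)
  then have "s * x * (s ^ k * x ^ k) = s * s ^ k * (x * x ^ k)"
    by (metis mult.assoc)
  with Suc show ?case
    by simp
qed simp

lemma regular_central_power_cancel:
  assumes "regular_central s"
  shows "s ^ k * (x::'a::ring_1) = 0 \<Longrightarrow> x = 0"
proof (induction k)
  case (Suc k)
  have "\<And>y. s * y = 0 \<Longrightarrow> y = 0"
    using assms unfolding regular_central_def by blast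
  with Suc show ?case
    by (simp add: mult.assoc)
qed simp

lemma nilpotent_mult_regular_central_iff:
  assumes "regular_central s"
  shows "nilpotent (s * (x::'a::ring_1)) \<longleftrightarrow> nilpotent x"
proof -
  have "\<forall>y. s * y = y * s"
    using assms unfolding regular_central_def by blast
  then have "(s * x) ^ k = 0 \<longleftrightarrow> x ^ k = 0" for k
    using regular_central_power_cancel[OF assms, of k "x ^ k"] central_power_mult by fastforce
  then show ?thesis
    unfolding nilpotent_def by blast
qed

definition rng_hom :: "('a::ring_1 \<Rightarrow> 'b::ring_1) \<Rightarrow> bool" where
  "rng_hom h \<longleftrightarrow> (\<forall>x y. h (x + y) = h x + h y) \<and> (\<forall>x y. h (x * y) = h x * h y)"

lemma rng_hom_add: "rng_hom h \<Longrightarrow> h (x + y) = h x + h y"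
  and rng_hom_mult: "rng_hom h \<Longrightarrow> h (x * y) = h x * h y"
  unfolding rng_hom_def by blast+

lemma rng_hom_zero: "rng_hom h \<Longrightarrow> h 0 = 0"
  by (metis add_0 add_cancel_right_right rng_hom_add)

lemma rng_hom_sum: "rng_hom h \<Longrightarrow> h (sum g A) = (\<Sum>x\<in>A. h (g x))"
  by (induction A rule: infinite_finite_induct) (auto simp: rng_hom_zero rng_hom_add)

lemma rng_hom_power_Suc: "rng_hom h \<Longrightarrow> h (x ^ Suc k) = h x ^ Suc k"
  by (induction k) (auto simp: rng_hom_mult)

lemma rng_hom_nilpotent: "rng_hom h \<Longrightarrow> nilpotent x \<Longrightarrow> nilpotent (h x)"
  unfolding nilpotent_def
  by (metis power_eq_0_mono le_SucI order_refl rng_hom_power_Suc rng_hom_zero)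

lemma rng_hom_mult_coeff:
  "rng_hom h \<Longrightarrow> h (mult_coeff a n b m k) = mult_coeff (h \<circ> a) n (h \<circ> b) m k"
  unfolding mult_coeff_def
  by (simp add: rng_hom_sum rng_hom_zero rng_hom_mult if_distrib cong: if_cong)

lemma ring_hom_imp_rng_hom: "ring_hom f \<Longrightarrow> rng_hom f"
  unfolding ring_hom_def rng_hom_def by blast

lemma rng_hom_fst: "rng_hom (fst :: 'a::ring_1 \<times> 'b::ring_1 \<Rightarrow> 'a)"
  and rng_hom_snd: "rng_hom (snd :: 'a::ring_1 \<times> 'b::ring_1 \<Rightarrow> 'b)"
  unfolding rng_hom_def by (simp_all add: times_prod_def)

lemma rng_hom_graph: "ring_hom f \<Longrightarrow> rng_hom (\<lambda>x. (x, f x))"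
  unfolding ring_hom_def rng_hom_def by (simp add: times_prod_def)

lemma rng_hom_Pair_zero: "rng_hom (\<lambda>y::'b::ring_1. (0::'a::ring_1, y))"
  unfolding rng_hom_def by (simp add: times_prod_def)

lemma nil_armendariz_on_rng_hom_pullback:
  assumes "rng_hom h" "h ` S \<subseteq> R" "\<And>x. nilpotent (h x) \<Longrightarrow> nilpotent x"
    and "nil_armendariz_on R"
  shows "nil_armendariz_on S"
proof (rule nil_armendariz_onI)
  fix a n b m i j
  assume a: "\<forall>i\<le>n. a i \<in> S" and b: "\<forall>j\<le>m. b j \<in> S"
    and coeff: "\<forall>k\<le>n + m. nilpotent (mult_coeff a n b m k)" and "i \<le> n" "j \<le> m"
  have "\<forall>k\<le>n + m. nilpotent (mult_coeff (h \<circ> a) n (h \<circ> b) m k)"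
    using coeff rng_hom_nilpotent[OF assms(1)] unfolding rng_hom_mult_coeff[OF assms(1), symmetric]
    by blast
  moreover have "\<forall>i\<le>n. (h \<circ> a) i \<in> R" "\<forall>j\<le>m. (h \<circ> b) j \<in> R"
    using a b assms(2) by auto
  ultimately have "nilpotent ((h \<circ> a) i * (h \<circ> b) j)"
    using nil_armendariz_onD[OF assms(4)] \<open>i \<le> n\<close> \<open>j \<le> m\<close> by blast
  then show "nilpotent (a i * b j)"
    using assms(3) by (simp add: rng_hom_mult[OF assms(1)])
qed

lemma mult_coeff_scale:
  assumes "\<forall>y. s * y = y * s"
  shows "mult_coeff (\<lambda>i. s * a i) n (\<lambda>j. s * b j) m k = s * (s * mult_coeff a n b m k)"
proof -
  have "s * x * (s * y) = s * (s * (x * y))" for x y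
    using assms by (metis mult.assoc)
  then show ?thesis
    unfolding mult_coeff_def sum_distrib_left by (simp add: if_distrib cong: if_cong)
qed

lemma nil_armendariz_on_scale:
  assumes "regular_central s" "(\<lambda>x. s * x) ` S \<subseteq> R" "nil_armendariz_on R"
  shows "nil_armendariz_on S"
proof (rule nil_armendariz_onI)
  fix a n b m i j
  assume a: "\<forall>i\<le>n. a i \<in> S" and b: "\<forall>j\<le>m. b j \<in> S"
    and coeff: "\<forall>k\<le>n + m. nilpotent (mult_coeff a n b m k)" and "i \<le> n" "j \<le> m"
  have central: "\<forall>y. s * y = y * s"
    using assms(1) unfolding regular_central_def by blast
  have "\<forall>k\<le>n + m. nilpotent (mult_coeff (\<lambda>i. s * a i) n (\<lambda>j. s * b j) m k)"
    using coeff by (simp add: mult_coeff_scale[OF central] nilpotent_mult_regular_central_iff assms(1))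
  moreover have "\<forall>i\<le>n. s * a i \<in> R" "\<forall>j\<le>m. s * b j \<in> R"
    using a b assms(2) by auto
  ultimately have "nilpotent (s * a i * (s * b j))"
    using nil_armendariz_onD[OF assms(3), where a = "\<lambda>i. s * a i" and b = "\<lambda>j. s * b j"]
      \<open>i \<le> n\<close> \<open>j \<le> m\<close> by blast
  moreover have "s * a i * (s * b j) = s * (s * (a i * b j))"
    using central by (metis mult.assoc)
  ultimately show "nilpotent (a i * b j)"
    by (simp add: nilpotent_mult_regular_central_iff assms(1))
qed

lemma nil_armendariz_on_Times:
  assumes "nil_armendariz_on R" "nil_armendariz_on T"
  shows "nil_armendariz_on (R \<times> T)"
proof (rule nil_armendariz_onI)
  fix a :: "nat \<Rightarrow> 'a \<times> 'b" and n b m i j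
  assume "\<forall>i\<le>n. a i \<in> R \<times> T" "\<forall>j\<le>m. b j \<in> R \<times> T"
    and coeff: "\<forall>k\<le>n + m. nilpotent (mult_coeff a n b m k)" and "i \<le> n" "j \<le> m"
  moreover have "\<forall>k\<le>n + m. nilpotent (mult_coeff (fst \<circ> a) n (fst \<circ> b) m k)
      \<and> nilpotent (mult_coeff (snd \<circ> a) n (snd \<circ> b) m k)"
    using coeff by (simp add: nilpotent_prod_iff flip: rng_hom_mult_coeff[OF rng_hom_fst]
        rng_hom_mult_coeff[OF rng_hom_snd])
  ultimately have "nilpotent (fst (a i) * fst (b j))" "nilpotent (snd (a i) * snd (b j))"
    using nil_armendariz_onD[OF assms(1), of n "fst \<circ> a" m "fst \<circ> b"]
      nil_armendariz_onD[OF assms(2), of n "snd \<circ> a" m "snd \<circ> b"] by (auto simp: mem_Times_iff)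
  then show "nilpotent (a i * b j)"
    by (simp add: nilpotent_prod_iff times_prod_def)
qed

lemma amalg_subset_Times: "amalg f J \<subseteq> UNIV \<times> img_plus f J"
  unfolding amalg_def img_plus_def by auto

lemma graph_mem_amalg: "0 \<in> J \<Longrightarrow> (a, f a) \<in> amalg f J"
  unfolding amalg_def by force

lemma Pair_zero_mem_amalg: "ring_hom f \<Longrightarrow> j \<in> J \<Longrightarrow> (0, j) \<in> amalg f J"
  unfolding amalg_def using rng_hom_zero[OF ring_hom_imp_rng_hom] by force

theorem theorem3p1:
  fixes f :: "'a::ring_1 \<Rightarrow> 'b::ring_1" and J :: "'b set"
  assumes "ring_hom f"
    and "two_sided_ideal J"
    and "J \<noteq> UNIV"
    and "J \<inter> {s. regular_central s} \<noteq> {}"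
  shows "nil_armendariz_on (amalg f J) \<longleftrightarrow>
           nil_armendariz_on (UNIV :: 'a set) \<and> nil_armendariz_on (img_plus f J)"
proof
  assume amalg: "nil_armendariz_on (amalg f J)"
  obtain s where "s \<in> J" "regular_central s"
    using assms(4) by blast
  have "0 \<in> J" "\<And>x. s * x \<in> J"
    using assms(2) \<open>s \<in> J\<close> unfolding two_sided_ideal_def by auto
  have "nil_armendariz_on J"
    using nil_armendariz_on_rng_hom_pullback[OF rng_hom_Pair_zero _ _ amalg]
      Pair_zero_mem_amalg[OF assms(1)] by (auto simp: nilpotent_prod_iff)
  then have "nil_armendariz_on (img_plus f J)"
    using nil_armendariz_on_scale[OF \<open>regular_central s\<close>] \<open>\<And>x. s * x \<in> J\<close> by blast
  moreover have "nil_armendariz_on (UNIV :: 'a set)"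
    using nil_armendariz_on_rng_hom_pullback[OF rng_hom_graph[OF assms(1)] _ _ amalg]
      graph_mem_amalg[OF \<open>0 \<in> J\<close>] by (auto simp: nilpotent_prod_iff)
  ultimately show "nil_armendariz_on (UNIV :: 'a set) \<and> nil_armendariz_on (img_plus f J)"
    by blast
next
  assume "nil_armendariz_on (UNIV :: 'a set) \<and> nil_armendariz_on (img_plus f J)"
  then show "nil_armendariz_on (amalg f J)"
    using nil_armendariz_on_subset[OF amalg_subset_Times] nil_armendariz_on_Times by blast
qed

end
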